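(* Let $s=6r+i$ with $r\ge1$ and $i\in\{0,\dots,5\}$. Among all polyiamonds with site-perimeter $s$, the maximal area is attained by the quasi-regular hexagon $E_{B_i}(r)$ (with $E_{B_0}(r)=E(r)$), and every polyiamond with site-perimeter $s$ attaining this maximal area is a quasi-regular hexagon (an image of $E_{B_i}(r)$ under a symmetry of $\mathbb T^2$).
   Context: Faces are the closed triangular faces of the triangular lattice $\mathbb T^2$ in $\mathbb R^2$. A polyiamond $P$ is a finite nonempty union of faces that is connected through shared edges (two faces sharing only a vertex are not adjacent); faces not in $P$ are empty faces. Its area $\|P\|$ is the number of its faces; its edge-perimeter $p(P)$ is the number of edges of $\mathbb T^2$ separating a face of $P$ from an empty face; its site-perimeter $s(P)$ is the number of empty faces sharing at least one edge with a face of $P$. For integers $d\ge1$, $a,b,c\ge0$ with $a+b,b+c,c+a\le d$, $T^d_{a,b,c}$ is the polyiamond obtained from an equilateral triangle of side length $d$ with sides on lattice lines (the union of its $d^2$ faces) by removing the equilateral sub-triangles of side lengths $a,b,c$ at its three corners; its boundary is a (possibly degenerate) hexagon with side lengths, in cyclic order, $a,\ d-a-b,\ b,\ d-b-c,\ c,\ d-c-a$, its area is $d^2-a^2-b^2-c^2$ and its edge- and site-perimeter equal $3d-a-b-c$. Quasi-regular hexagons: for $r\ge1$ let $E(r)=T^{3r}_{r,r,r}$ (regular hexagon of side $r$), $E_{B_1}(r)=T^{3r}_{r-1,r,r}$, $E_{B_2}(r)=T^{3r+1}_{r,r,r+1}$, $E_{B_3}(r)=T^{3r+1}_{r,r,r}$,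 $E_{B_4}(r)=T^{3r+2}_{r,r+1,r+1}$, $E_{B_5}(r)=T^{3r+2}_{r,r,r+1}$. Their areas are $6r^2,\ 6r^2+2r-1,\ 6r^2+4r,\ 6r^2+6r+1,\ 6r^2+8r+2,\ 6r^2+10r+3$, and their edge-perimeters (equal to their site-perimeters) are $6r,6r+1,\dots,6r+5$. A quasi-regular hexagon is any image of one of these under a symmetry (translation, rotation, reflection) of $\mathbb T^2$; $\mathcal Q$ denotes the set of all quasi-regular hexagons. *)

theory Defs
  imports Main
begin

text \<open>Vertices of the triangular lattice are written in the lattice basis
  e1 = (1,0), e2 = (1/2, sqrt 3/2): the pair (a,b) denotes the point a e1 + b e2.\<close>

type_synonym vertex = "int \<times> int"
type_synonym face = "vertex set"

definition face_up :: "int \<Rightarrow> int \<Rightarrow> face" where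
  "face_up x y = {(x,y), (x+1,y), (x,y+1)}"

definition face_down :: "int \<Rightarrow> int \<Rightarrow> face" where
  "face_down x y = {(x+1,y), (x,y+1), (x+1,y+1)}"

definition faces :: "face set" where
  "faces = range (case_prod face_up) \<union> range (case_prod face_down)"

definition adjacent :: "face \<Rightarrow> face \<Rightarrow> bool" where
  "adjacent F G \<longleftrightarrow> F \<in> faces \<and> G \<in> faces \<and> F \<noteq> G \<and> card (F \<inter> G) = 2"

definition polyiamond :: "face set \<Rightarrow> bool" where
  "polyiamond P \<longleftrightarrow> P \<subseteq> faces \<and> finite P \<and> P \<noteq> {} \<and>
     (\<forall>F\<in>P. \<forall>G\<in>P. (\<lambda>A B. A \<in> P \<and> B \<in> P \<and> adjacent A B)\<^sup>*\<^sup>* F G)"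

definition area :: "face set \<Rightarrow> nat" where
  "area P = card P"

definition site_perimeter :: "face set \<Rightarrow> nat" where
  "site_perimeter P = card {G \<in> faces. G \<notin> P \<and> (\<exists>F\<in>P. adjacent F G)}"

text \<open>Squared Euclidean distance between lattice points (in the lattice basis).\<close>
definition dist2 :: "vertex \<Rightarrow> vertex \<Rightarrow> int" where
  "dist2 p q = (let a = fst p - fst q; b = snd p - snd q in a*a + a*b + b*b)"

text \<open>Symmetries of the triangular lattice: bijections of the vertex set preserving
  Euclidean distance (these are exactly restrictions of the plane isometries
  mapping the lattice onto itself: translations, rotations, reflections).\<close>
definition lattice_sym :: "(vertex \<Rightarrow> vertex) \<Rightarrow> bool" where
  "lattice_sym f \<longleftrightarrow> bij f \<and> (\<forall>p q. dist2 (f p) (f q) = dist2 p q)"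

definition sym_image :: "(vertex \<Rightarrow> vertex) \<Rightarrow> face set \<Rightarrow> face set" where
  "sym_image f P = (\<lambda>F. f ` F) ` P"

text \<open>T^d_{a,b,c}: big triangle with corners V0=(0,0), V1=(d,0), V2=(0,d), with
  corner triangles of sides a (at V0), b (at V1), c (at V2) removed.\<close>
definition T :: "nat \<Rightarrow> nat \<Rightarrow> nat \<Rightarrow> nat \<Rightarrow> face set" where
  "T d a b c = {F \<in> faces. \<forall>(x,y)\<in>F. 0 \<le> x \<and> 0 \<le> y \<and> x + y \<le> int d \<and>
       int a \<le> x + y \<and> x \<le> int d - int b \<and> y \<le> int d - int c}"

definition EB :: "nat \<Rightarrow> nat \<Rightarrow> face set" where
  "EB i r = (if i = 0 then T (3*r) r r r
     else if i = 1 then T (3*r) (r-1) r r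
     else if i = 2 then T (3*r+1) r r (r+1)
     else if i = 3 then T (3*r+1) r r r
     else if i = 4 then T (3*r+2) r (r+1) (r+1)
     else T (3*r+2) r r (r+1))"

definition quasi_regular_hexagons :: "face set set" where
  "quasi_regular_hexagons = {sym_image f (EB i r) | f i r. lattice_sym f \<and> i < 6 \<and> r \<ge> 1}"

end

theory Submission
  imports Defs
begin

text \<open>A face lies in one strip of each of the three families of parallel lattice lines.
  If a connected polyiamond P meets n_x, n_y, n_z strips of the three families, these strips
  form intervals, and each of them contributes its own empty face adjacent to P: the face just
  beyond the first (or last) face of P in that strip.  Hence s(P) >= n_x + n_y + n_z.  On the
  other hand P lies in the hexagon T^d_{a,b,c} cut out by these strips, which satisfies
  3d - a - b - c = n_x + n_y + n_z.  The identity
  (3d-a-b-c)^2 - 6 (d^2-a^2-b^2-c^2) = 3 (d-a-b-c)^2 + 2 ((a-b)^2 + (b-c)^2 + (a-c)^2)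
  bounds the area of that hexagon by about s^2/6, and a parity argument sharpens this to the
  area of E_{B_i}(r).  In the equality case P is the whole hexagon and d-a-b-c, a-b, b-c lie
  in {-1,0,1}, which leaves only the rotations and half-turns of E_{B_i}(r).\<close>

type_synonym tri = "int \<times> int \<times> bool"

definition face_of :: "tri \<Rightarrow> face" where
  "face_of u = (case u of (x,y,t) \<Rightarrow> if t then face_down x y else face_up x y)"

lemma mem_face_of: "v \<in> face_of (x,y,t) \<longleftrightarrow>
   x \<le> fst v \<and> fst v \<le> x+1 \<and> y \<le> snd v \<and> snd v \<le> y+1 \<and>
   x+y+of_bool t \<le> fst v + snd v \<and> fst v + snd v \<le> x+y+of_bool t+1"
  by (cases v) (auto simp: face_of_def face_up_def face_down_def)

lemma inj_face_of: "inj face_of"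
proof (rule injI)
  fix u v assume e: "face_of u = face_of v"
  obtain x y t x' y' t' where uv: "u = (x,y,t)" "v = (x',y',t')" by (cases u, cases v) auto
  have m: "\<And>p. p \<in> face_of (x,y,t) \<longleftrightarrow> p \<in> face_of (x',y',t')" using e uv by auto
  have "x' \<le> x \<and> y' \<le> y" using m[of "(x,y+1)"] m[of "(x+1,y)"] by (simp add: mem_face_of)
  moreover have "x \<le> x' \<and> y \<le> y'" using m[of "(x',y'+1)"] m[of "(x'+1,y')"] by (simp add: mem_face_of)
  moreover have "t = t'" using m[of "(x,y)"] m[of "(x+1,y+1)"] calculation
    by (cases t; cases t'; simp add: mem_face_of)
  ultimately show "u = v" using uv by auto
qed

lemma face_of_eq_iff [simp]: "face_of u = face_of v \<longleftrightarrow> u = v"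
  using inj_face_of by (auto dest: injD)

lemma face_of_in_image_iff [simp]: "face_of u \<in> face_of ` Q \<longleftrightarrow> u \<in> Q"
  using inj_face_of by (auto dest: injD)

lemma faces_eq_range_face_of: "faces = range face_of"
  unfolding faces_def face_of_def by (auto simp: image_def)

definition tri_adj :: "tri \<Rightarrow> tri \<Rightarrow> bool" where
  "tri_adj u v = (case u of (x,y,t) \<Rightarrow> case v of (x',y',t') \<Rightarrow>
     t \<noteq> t' \<and> (if t then (x' = x \<and> y' = y) \<or> (x' = x+1 \<and> y' = y) \<or> (x' = x \<and> y' = y+1)
                  else (x' = x \<and> y' = y) \<or> (x' = x-1 \<and> y' = y) \<or> (x' = x \<and> y' = y-1)))"

lemma tri_adj_sym: "tri_adj u v \<Longrightarrow> tri_adj v u"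
  by (cases u; cases v) (auto simp: tri_adj_def split: if_splits)

lemma face_down_Int_face_up:
  "face_down x y \<inter> face_up x y = {(x+1,y), (x,y+1)}"
  "face_down x y \<inter> face_up (x+1) y = {(x+1,y), (x+1,y+1)}"
  "face_down x y \<inter> face_up x (y+1) = {(x,y+1), (x+1,y+1)}"
  by (auto simp: face_down_def face_up_def)

lemma card_face_of_Int_if_tri_adj:
  assumes "tri_adj u v" shows "card (face_of u \<inter> face_of v) = 2"
proof -
  have down: "card (face_of (x,y,True) \<inter> face_of v) = 2" if "tri_adj (x,y,True) v" for x y v
    using that by (cases v) (auto simp: tri_adj_def face_of_def face_down_Int_face_up)
  obtain x y t where u: "u = (x,y,t)" by (cases u) auto
  show ?thesis
  proof (cases t)
    case True then show ?thesis using down assms u by simp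
  next
    case False
    obtain x' y' where "v = (x',y',True)"
      using assms u False by (cases v) (auto simp: tri_adj_def)
    then show ?thesis using down[of x' y' u] tri_adj_sym[OF assms] by (simp add: Int_commute)
  qed
qed

lemma tri_adj_if_card_face_of_Int:
  assumes "card (face_of u \<inter> face_of v) = 2" "u \<noteq> v" shows "tri_adj u v"
proof -
  obtain x y t x' y' t' where uv: "u = (x,y,t)" "v = (x',y',t')" by (cases u, cases v) auto
  obtain p q where pq: "p \<noteq> q" "face_of u \<inter> face_of v = {p,q}"
    using assms(1) by (auto simp: card_2_iff)
  obtain p1 p2 q1 q2 where p: "p = (p1,p2)" "q = (q1,q2)" by (cases p, cases q)
  have "p \<in> face_of u" "p \<in> face_of v" "q \<in> face_of u" "q \<in> face_of v" using pq by auto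
  then show ?thesis using uv p pq(1) assms(2)
    by (cases t; cases t'; simp add: mem_face_of tri_adj_def; smt (verit))
qed

lemma adjacent_face_of_iff: "adjacent (face_of u) (face_of v) \<longleftrightarrow> tri_adj u v"
proof
  assume "adjacent (face_of u) (face_of v)"
  then show "tri_adj u v" by (auto simp: adjacent_def intro: tri_adj_if_card_face_of_Int)
next
  assume a: "tri_adj u v"
  then have "u \<noteq> v" by (cases u; cases v; auto simp: tri_adj_def)
  then show "adjacent (face_of u) (face_of v)"
    using card_face_of_Int_if_tri_adj[OF a] by (auto simp: adjacent_def faces_eq_range_face_of)
qed

definition adj_in :: "tri set \<Rightarrow> tri \<Rightarrow> tri \<Rightarrow> bool" where
  "adj_in Q u v \<longleftrightarrow> u \<in> Q \<and> v \<in> Q \<and> tri_adj u v"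

definition tri_connected :: "tri set \<Rightarrow> bool" where
  "tri_connected Q \<longleftrightarrow> (\<forall>u\<in>Q. \<forall>v\<in>Q. (adj_in Q)\<^sup>*\<^sup>* u v)"

definition tri_boundary :: "tri set \<Rightarrow> tri set" where
  "tri_boundary Q = {v. v \<notin> Q \<and> (\<exists>u\<in>Q. tri_adj u v)}"

lemma adj_in_rtranclp_sym: "(adj_in Q)\<^sup>*\<^sup>* u v \<Longrightarrow> (adj_in Q)\<^sup>*\<^sup>* v u"
proof (induction rule: rtranclp_induct)
  case (step v w)
  then have "adj_in Q w v" by (auto simp: adj_in_def intro: tri_adj_sym)
  then show ?case using step by (meson converse_rtranclp_into_rtranclp)
qed simp

lemma face_path_if_adj_in_path:
  assumes "(adj_in Q)\<^sup>*\<^sup>* u v"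
  shows "(\<lambda>A B. A \<in> face_of ` Q \<and> B \<in> face_of ` Q \<and> adjacent A B)\<^sup>*\<^sup>* (face_of u) (face_of v)"
  using assms
proof (induction rule: rtranclp_induct)
  case (step v w)
  then show ?case
    by (auto simp: adj_in_def adjacent_face_of_iff intro: rtranclp.rtrancl_into_rtrancl)
qed simp

lemma adj_in_path_if_face_path:
  assumes "(\<lambda>A B. A \<in> face_of ` Q \<and> B \<in> face_of ` Q \<and> adjacent A B)\<^sup>*\<^sup>* F G" "F = face_of u"
  shows "\<forall>v. G = face_of v \<longrightarrow> (adj_in Q)\<^sup>*\<^sup>* u v"
  using assms
proof (induction rule: rtranclp_induct)
  case (step G H)
  then obtain w where w: "G = face_of w" "w \<in> Q" by auto
  then have "(adj_in Q)\<^sup>*\<^sup>* u w" using step by auto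
  then show ?case
    using step w by (auto simp: adj_in_def adjacent_face_of_iff intro: rtranclp.rtrancl_into_rtrancl)
qed simp

lemma polyiamond_face_of_iff:
  "polyiamond (face_of ` Q) \<longleftrightarrow> finite Q \<and> Q \<noteq> {} \<and> tri_connected Q"
proof
  assume p: "polyiamond (face_of ` Q)"
  have "finite Q" using p finite_imageD[of face_of Q] inj_face_of
    by (auto simp: polyiamond_def inj_on_def)
  moreover have "tri_connected Q"
    unfolding tri_connected_def
  proof (intro ballI)
    fix u v assume "u \<in> Q" "v \<in> Q"
    then have "(\<lambda>A B. A \<in> face_of ` Q \<and> B \<in> face_of ` Q \<and> adjacent A B)\<^sup>*\<^sup>* (face_of u) (face_of v)"
      using p by (auto simp: polyiamond_def)
    then show "(adj_in Q)\<^sup>*\<^sup>* u v" using adj_in_path_if_face_path by blast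
  qed
  ultimately show "finite Q \<and> Q \<noteq> {} \<and> tri_connected Q" using p by (auto simp: polyiamond_def)
next
  assume "finite Q \<and> Q \<noteq> {} \<and> tri_connected Q"
  then show "polyiamond (face_of ` Q)"
    by (auto simp: polyiamond_def faces_eq_range_face_of tri_connected_def
        intro: face_path_if_adj_in_path)
qed

lemma polyiamondE:
  assumes "polyiamond P"
  obtains Q where "P = face_of ` Q" "finite Q" "Q \<noteq> {}" "tri_connected Q"
proof -
  have "P \<subseteq> range face_of" using assms by (auto simp: polyiamond_def faces_eq_range_face_of)
  then have "P = face_of ` (face_of -` P)" by auto
  then show ?thesis using assms polyiamond_face_of_iff that by metis
qed

lemma area_face_of: "area (face_of ` Q) = card Q"
  using inj_face_of by (simp add: area_def card_image inj_on_def)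

lemma site_perimeter_face_of: "site_perimeter (face_of ` Q) = card (tri_boundary Q)"
proof -
  have "{G \<in> faces. G \<notin> face_of ` Q \<and> (\<exists>F\<in>face_of ` Q. adjacent F G)} = face_of ` tri_boundary Q"
    by (auto simp: faces_eq_range_face_of tri_boundary_def adjacent_face_of_iff)
  then show ?thesis using inj_face_of by (simp add: site_perimeter_def card_image inj_on_def)
qed

text \<open>The three families of lattice lines cut the plane into strips.  strip_x, strip_y,
  strip_z index the strip of each family containing a face; rank_x (in an x-strip) and
  rank_yz (in a y- or z-strip) number the faces along a strip so that faces with
  consecutive ranks are adjacent.\<close>

definition strip_x :: "tri \<Rightarrow> int" where "strip_x u = fst u"
definition strip_y :: "tri \<Rightarrow> int" where "strip_y u = fst (snd u)"
definition strip_z :: "tri \<Rightarrow> int" where "strip_z u = fst u + fst (snd u) + of_bool (snd (snd u))"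
definition rank_x :: "tri \<Rightarrow> int" where "rank_x u = 2 * fst (snd u) + of_bool (snd (snd u))"
definition rank_yz :: "tri \<Rightarrow> int" where "rank_yz u = 2 * fst u + of_bool (snd (snd u))"

definition tri_x :: "int \<Rightarrow> int \<Rightarrow> tri" where "tri_x m p = (m, p div 2, odd p)"
definition tri_y :: "int \<Rightarrow> int \<Rightarrow> tri" where "tri_y m p = (p div 2, m, odd p)"
definition tri_z :: "int \<Rightarrow> int \<Rightarrow> tri" where
  "tri_z m p = (p div 2, m - p div 2 - of_bool (odd p), odd p)"

lemma strip_rank_tri_x [simp]: "strip_x (tri_x m p) = m" "rank_x (tri_x m p) = p"
  by (auto simp: tri_x_def strip_x_def rank_x_def)
lemma strip_rank_tri_y [simp]: "strip_y (tri_y m p) = m" "rank_yz (tri_y m p) = p"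
  by (auto simp: tri_y_def strip_y_def rank_yz_def)
lemma strip_rank_tri_z [simp]: "strip_z (tri_z m p) = m" "rank_yz (tri_z m p) = p"
  by (auto simp: tri_z_def strip_z_def rank_yz_def)

lemma tri_x_strip_rank: "tri_x (strip_x u) (rank_x u) = u"
  by (cases u) (auto simp: tri_x_def strip_x_def rank_x_def)
lemma tri_y_strip_rank: "tri_y (strip_y u) (rank_yz u) = u"
  by (cases u) (auto simp: tri_y_def strip_y_def rank_yz_def)
lemma tri_z_strip_rank: "tri_z (strip_z u) (rank_yz u) = u"
  by (cases u) (auto simp: tri_z_def strip_z_def rank_yz_def)

lemma tri_adj_tri_x_pred: "tri_adj u (tri_x (strip_x u) (rank_x u - 1))"
  by (cases u) (auto simp: tri_x_def strip_x_def rank_x_def tri_adj_def)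
lemma tri_adj_tri_y_succ: "tri_adj u (tri_y (strip_y u) (rank_yz u + 1))"
  by (cases u) (auto simp: tri_y_def strip_y_def rank_yz_def tri_adj_def)
lemma tri_adj_tri_z_pred: "tri_adj u (tri_z (strip_z u) (rank_yz u - 1))"
  by (cases u) (auto simp: tri_z_def strip_z_def rank_yz_def tri_adj_def)

lemma strip_x_adj_le: "tri_adj u v \<Longrightarrow> strip_x v \<le> strip_x u + 1"
  by (cases u; cases v) (auto simp: tri_adj_def strip_x_def split: if_splits)
lemma strip_y_adj_le: "tri_adj u v \<Longrightarrow> strip_y v \<le> strip_y u + 1"
  by (cases u; cases v) (auto simp: tri_adj_def strip_y_def split: if_splits)
lemma strip_z_adj_le: "tri_adj u v \<Longrightarrow> strip_z v \<le> strip_z u + 1"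
  by (cases u; cases v) (auto simp: tri_adj_def strip_z_def split: if_splits)

lemma image_eq_interval_if_adj_le:
  fixes k :: "tri \<Rightarrow> int"
  assumes step: "\<And>u v. tri_adj u v \<Longrightarrow> k v \<le> k u + 1"
    and Q: "finite Q" "Q \<noteq> {}" "tri_connected Q"
  shows "k ` Q = {Min (k ` Q)..Max (k ` Q)}"
proof
  have between: "n \<in> k ` Q" if "(adj_in Q)\<^sup>*\<^sup>* u v" "u \<in> Q" "k u \<le> n" "n \<le> k v" for u v n
    using that
  proof (induction arbitrary: n rule: rtranclp_induct)
    case (step v w)
    show ?case
    proof (cases "n \<le> k v")
      case False
      then have "n = k w" using step.prems step.hyps(2) assms(1)[of v w] by (auto simp: adj_in_def)
      then show ?thesis using step.hyps(2) by (auto simp: adj_in_def)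
    qed (use step in auto)
  qed auto
  show "{Min (k ` Q)..Max (k ` Q)} \<subseteq> k ` Q"
  proof
    fix n assume n: "n \<in> {Min (k ` Q)..Max (k ` Q)}"
    have "Min (k ` Q) \<in> k ` Q" "Max (k ` Q) \<in> k ` Q" using Q by auto
    then obtain u v where u: "u \<in> Q" "k u = Min (k ` Q)" and v: "v \<in> Q" "k v = Max (k ` Q)"
      by (auto simp del: Min_in Max_in)
    show "n \<in> k ` Q" using between[of u v n] Q(3) u v n by (auto simp: tri_connected_def)
  qed
qed (use Q in auto)

lemma card_image_eq_width:
  fixes k :: "tri \<Rightarrow> int"
  assumes "\<And>u v. tri_adj u v \<Longrightarrow> k v \<le> k u + 1" "finite Q" "Q \<noteq> {}" "tri_connected Q"
  shows "int (card (k ` Q)) = Max (k ` Q) - Min (k ` Q) + 1"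
proof -
  have "Min (k ` Q) \<le> Max (k ` Q)" using assms(2,3) by simp
  then show ?thesis by (subst image_eq_interval_if_adj_le[OF assms]) auto
qed

definition first_x :: "tri set \<Rightarrow> int \<Rightarrow> int" where
  "first_x Q m = Min (rank_x ` {u\<in>Q. strip_x u = m})"
definition last_y :: "tri set \<Rightarrow> int \<Rightarrow> int" where
  "last_y Q m = Max (rank_yz ` {u\<in>Q. strip_y u = m})"
definition first_z :: "tri set \<Rightarrow> int \<Rightarrow> int" where
  "first_z Q m = Min (rank_yz ` {u\<in>Q. strip_z u = m})"

definition before_x :: "tri set \<Rightarrow> int \<Rightarrow> tri" where "before_x Q m = tri_x m (first_x Q m - 1)"
definition after_y :: "tri set \<Rightarrow> int \<Rightarrow> tri" where "after_y Q m = tri_y m (last_y Q m + 1)"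
definition before_z :: "tri set \<Rightarrow> int \<Rightarrow> tri" where "before_z Q m = tri_z m (first_z Q m - 1)"

lemma first_x:
  assumes "finite Q" "m \<in> strip_x ` Q"
  shows "tri_x m (first_x Q m) \<in> Q" "\<And>u. u \<in> Q \<Longrightarrow> strip_x u = m \<Longrightarrow> first_x Q m \<le> rank_x u"
proof -
  have f: "finite (rank_x ` {u\<in>Q. strip_x u = m})" "rank_x ` {u\<in>Q. strip_x u = m} \<noteq> {}"
    using assms by auto
  obtain u where "u \<in> Q" "strip_x u = m" "rank_x u = first_x Q m"
    using Min_in[OF f] unfolding first_x_def by auto
  then show "tri_x m (first_x Q m) \<in> Q" using tri_x_strip_rank[of u] by simp
  show "\<And>u. u \<in> Q \<Longrightarrow> strip_x u = m \<Longrightarrow> first_x Q m \<le> rank_x u"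
    unfolding first_x_def using f by (intro Min_le) auto
qed

lemma last_y:
  assumes "finite Q" "m \<in> strip_y ` Q"
  shows "tri_y m (last_y Q m) \<in> Q" "\<And>u. u \<in> Q \<Longrightarrow> strip_y u = m \<Longrightarrow> rank_yz u \<le> last_y Q m"
proof -
  have f: "finite (rank_yz ` {u\<in>Q. strip_y u = m})" "rank_yz ` {u\<in>Q. strip_y u = m} \<noteq> {}"
    using assms by auto
  obtain u where "u \<in> Q" "strip_y u = m" "rank_yz u = last_y Q m"
    using Max_in[OF f] unfolding last_y_def by auto
  then show "tri_y m (last_y Q m) \<in> Q" using tri_y_strip_rank[of u] by simp
  show "\<And>u. u \<in> Q \<Longrightarrow> strip_y u = m \<Longrightarrow> rank_yz u \<le> last_y Q m"
    unfolding last_y_def using f by (intro Max_ge) auto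
qed

lemma first_z:
  assumes "finite Q" "m \<in> strip_z ` Q"
  shows "tri_z m (first_z Q m) \<in> Q" "\<And>u. u \<in> Q \<Longrightarrow> strip_z u = m \<Longrightarrow> first_z Q m \<le> rank_yz u"
proof -
  have f: "finite (rank_yz ` {u\<in>Q. strip_z u = m})" "rank_yz ` {u\<in>Q. strip_z u = m} \<noteq> {}"
    using assms by auto
  obtain u where "u \<in> Q" "strip_z u = m" "rank_yz u = first_z Q m"
    using Min_in[OF f] unfolding first_z_def by auto
  then show "tri_z m (first_z Q m) \<in> Q" using tri_z_strip_rank[of u] by simp
  show "\<And>u. u \<in> Q \<Longrightarrow> strip_z u = m \<Longrightarrow> first_z Q m \<le> rank_yz u"
    unfolding first_z_def using f by (intro Min_le) auto
qed

lemma before_x_in_boundary: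
  assumes "finite Q" "m \<in> strip_x ` Q" shows "before_x Q m \<in> tri_boundary Q"
proof -
  have "tri_adj (tri_x m (first_x Q m)) (before_x Q m)"
    using tri_adj_tri_x_pred[of "tri_x m (first_x Q m)"] by (simp add: before_x_def)
  moreover have "before_x Q m \<notin> Q" using first_x(2)[OF assms, of "before_x Q m"] by (auto simp: before_x_def)
  ultimately show ?thesis using first_x(1)[OF assms] by (auto simp: tri_boundary_def)
qed

lemma after_y_in_boundary:
  assumes "finite Q" "m \<in> strip_y ` Q" shows "after_y Q m \<in> tri_boundary Q"
proof -
  have "tri_adj (tri_y m (last_y Q m)) (after_y Q m)"
    using tri_adj_tri_y_succ[of "tri_y m (last_y Q m)"] by (simp add: after_y_def)
  moreover have "after_y Q m \<notin> Q" using last_y(2)[OF assms, of "after_y Q m"] by (auto simp: after_y_def)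
  ultimately show ?thesis using last_y(1)[OF assms] by (auto simp: tri_boundary_def)
qed

lemma before_z_in_boundary:
  assumes "finite Q" "m \<in> strip_z ` Q" shows "before_z Q m \<in> tri_boundary Q"
proof -
  have "tri_adj (tri_z m (first_z Q m)) (before_z Q m)"
    using tri_adj_tri_z_pred[of "tri_z m (first_z Q m)"] by (simp add: before_z_def)
  moreover have "before_z Q m \<notin> Q" using first_z(2)[OF assms, of "before_z Q m"] by (auto simp: before_z_def)
  ultimately show ?thesis using first_z(1)[OF assms] by (auto simp: tri_boundary_def)
qed

text \<open>The faces before_x, after_y, before_z of different strip families never coincide:
  the face across another edge of a common face would belong to Q and lie strictly beyond
  the extreme face of Q in its own strip.\<close>

lemma before_x_ne_after_y:
  assumes "finite Q" "m \<in> strip_x ` Q" "m' \<in> strip_y ` Q" shows "before_x Q m \<noteq> after_y Q m'"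
proof
  assume e: "before_x Q m = after_y Q m'"
  obtain x y t where G: "before_x Q m = (x,y,t)" by (cases "before_x Q m") auto
  have g: "(x,y,t) = tri_x m (first_x Q m - 1)" "(x,y,t) = tri_y m' (last_y Q m' + 1)"
    using G e by (simp_all add: before_x_def after_y_def)
  have "strip_x (x,y,t) = m" "rank_x (x,y,t) = first_x Q m - 1"
    "strip_y (x,y,t) = m'" "rank_yz (x,y,t) = last_y Q m' + 1"
    by (subst g(1), simp)+ (subst g(2), simp)+
  then have m: "x = m" "y = m'" and first: "first_x Q m = 2*y + of_bool t + 1"
    and last: "last_y Q m' = 2*x + of_bool t - 1"
    by (auto simp: strip_x_def strip_y_def rank_x_def rank_yz_def)
  show False
  proof (cases t)
    case True
    have "tri_y m' (last_y Q m') = (x,y,False)" using last True m by (simp add: tri_y_def)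
    then show False
      using last_y(1)[OF assms(1,3)] first_x(2)[OF assms(1,2), of "(x,y,False)"] first m True
      by (simp add: strip_x_def rank_x_def)
  next
    case False
    have "tri_x m (first_x Q m) = (x,y,True)" using first False m by (simp add: tri_x_def)
    then show False
      using first_x(1)[OF assms(1,2)] last_y(2)[OF assms(1,3), of "(x,y,True)"] last m False
      by (simp add: strip_y_def rank_yz_def)
  qed
qed

lemma before_x_ne_before_z:
  assumes "finite Q" "m \<in> strip_x ` Q" "m' \<in> strip_z ` Q" shows "before_x Q m \<noteq> before_z Q m'"
proof
  assume e: "before_x Q m = before_z Q m'"
  obtain x y t where G: "before_x Q m = (x,y,t)" by (cases "before_x Q m") auto
  have g: "(x,y,t) = tri_x m (first_x Q m - 1)" "(x,y,t) = tri_z m' (first_z Q m' - 1)"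
    using G e by (simp_all add: before_x_def before_z_def)
  have "strip_x (x,y,t) = m" "rank_x (x,y,t) = first_x Q m - 1"
    "strip_z (x,y,t) = m'" "rank_yz (x,y,t) = first_z Q m' - 1"
    by (subst g(1), simp)+ (subst g(2), simp)+
  then have m: "x = m" "m' = x + y + of_bool t" and fx: "first_x Q m = 2*y + of_bool t + 1"
    and fz: "first_z Q m' = 2*x + of_bool t + 1"
    by (auto simp: strip_x_def strip_z_def rank_x_def rank_yz_def)
  show False
  proof (cases t)
    case True
    have "tri_x m (first_x Q m) = (x,y+1,False)" using fx True m by (simp add: tri_x_def)
    then show False
      using first_x(1)[OF assms(1,2)] first_z(2)[OF assms(1,3), of "(x,y+1,False)"] fz m True
      by (simp add: strip_z_def rank_yz_def)
  next
    case False
    have "tri_z m' (first_z Q m') = (x,y-1,True)" using fz False m by (simp add: tri_z_def)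
    then show False
      using first_z(1)[OF assms(1,3)] first_x(2)[OF assms(1,2), of "(x,y-1,True)"] fx m False
      by (simp add: strip_x_def rank_x_def)
  qed
qed

lemma after_y_ne_before_z:
  assumes "finite Q" "m \<in> strip_y ` Q" "m' \<in> strip_z ` Q" shows "after_y Q m \<noteq> before_z Q m'"
proof
  assume e: "after_y Q m = before_z Q m'"
  obtain x y t where G: "after_y Q m = (x,y,t)" by (cases "after_y Q m") auto
  have g: "(x,y,t) = tri_y m (last_y Q m + 1)" "(x,y,t) = tri_z m' (first_z Q m' - 1)"
    using G e by (simp_all add: after_y_def before_z_def)
  have "strip_y (x,y,t) = m" "rank_yz (x,y,t) = last_y Q m + 1"
    "strip_z (x,y,t) = m'" "rank_yz (x,y,t) = first_z Q m' - 1"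
    by (subst g(1), simp)+ (subst g(2), simp)+
  then have m: "y = m" "m' = x + y + of_bool t" and ly: "last_y Q m = 2*x + of_bool t - 1"
    and fz: "first_z Q m' = 2*x + of_bool t + 1"
    by (auto simp: strip_y_def strip_z_def rank_yz_def)
  show False
  proof (cases t)
    case True
    have "tri_z m' (first_z Q m') = (x+1,y,False)" using fz True m by (simp add: tri_z_def)
    then show False
      using first_z(1)[OF assms(1,3)] last_y(2)[OF assms(1,2), of "(x+1,y,False)"] ly m True
      by (simp add: strip_y_def rank_yz_def)
  next
    case False
    have "tri_y m (last_y Q m) = (x-1,y,True)" using ly False m by (simp add: tri_y_def)
    then show False
      using last_y(1)[OF assms(1,2)] first_z(2)[OF assms(1,3), of "(x-1,y,True)"] fz m False
      by (simp add: strip_z_def rank_yz_def)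
  qed
qed

lemma finite_tri_boundary: assumes "finite Q" shows "finite (tri_boundary Q)"
proof -
  have "finite {v. tri_adj u v}" for u
  proof -
    obtain x y t where u: "u = (x,y,t)" by (cases u) auto
    have "{v. tri_adj u v} \<subseteq> {(x,y,\<not>t),(x+1,y,\<not>t),(x,y+1,\<not>t),(x-1,y,\<not>t),(x,y-1,\<not>t)}"
      using u by (auto simp: tri_adj_def split: if_splits)
    then show ?thesis by (rule finite_subset) auto
  qed
  then have "finite (\<Union>u\<in>Q. {v. tri_adj u v})" using assms by auto
  moreover have "tri_boundary Q \<subseteq> (\<Union>u\<in>Q. {v. tri_adj u v})" by (auto simp: tri_boundary_def)
  ultimately show ?thesis by (rule finite_subset[rotated])
qed

lemma card_strips_le_card_boundary:
  assumes "finite Q"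
  shows "card (strip_x ` Q) + card (strip_y ` Q) + card (strip_z ` Q) \<le> card (tri_boundary Q)"
proof -
  let ?X = "before_x Q ` strip_x ` Q" and ?Y = "after_y Q ` strip_y ` Q"
    and ?Z = "before_z Q ` strip_z ` Q"
  have inj: "inj_on (before_x Q) (strip_x ` Q)" "inj_on (after_y Q) (strip_y ` Q)"
      "inj_on (before_z Q) (strip_z ` Q)"
    by (metis before_x_def inj_onI strip_rank_tri_x(1), metis after_y_def inj_onI strip_rank_tri_y(1),
        metis before_z_def inj_onI strip_rank_tri_z(1))
  have "?X \<inter> ?Y = {}" "(?X \<union> ?Y) \<inter> ?Z = {}"
    using before_x_ne_after_y[OF assms] before_x_ne_before_z[OF assms]
      after_y_ne_before_z[OF assms] by blast+
  then have "card (?X \<union> ?Y \<union> ?Z) = card (strip_x ` Q) + card (strip_y ` Q) + card (strip_z ` Q)"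
    using assms inj by (simp add: card_Un_disjoint card_image)
  moreover have "?X \<union> ?Y \<union> ?Z \<subseteq> tri_boundary Q"
    using before_x_in_boundary[OF assms] after_y_in_boundary[OF assms]
      before_z_in_boundary[OF assms] by blast
  ultimately show ?thesis using card_mono[OF finite_tri_boundary[OF assms]] by metis
qed

lemma strip_widths_le_card_boundary:
  assumes "finite Q" "Q \<noteq> {}" "tri_connected Q"
  shows "(Max (strip_x ` Q) - Min (strip_x ` Q) + 1) + (Max (strip_y ` Q) - Min (strip_y ` Q) + 1)
       + (Max (strip_z ` Q) - Min (strip_z ` Q) + 1) \<le> int (card (tri_boundary Q))"
  using card_strips_le_card_boundary[OF assms(1)]
    card_image_eq_width[of strip_x, OF strip_x_adj_le assms] card_image_eq_width[of strip_y, OF strip_y_adj_le assms]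
    card_image_eq_width[of strip_z, OF strip_z_adj_le assms]
  by linarith

definition hexagon :: "int \<Rightarrow> int \<Rightarrow> int \<Rightarrow> int \<Rightarrow> int \<Rightarrow> int \<Rightarrow> tri set" where
  "hexagon a0 a1 b0 b1 c0 c1 = {u. a0 \<le> strip_x u \<and> strip_x u \<le> a1 \<and> b0 \<le> strip_y u \<and>
     strip_y u \<le> b1 \<and> c0 \<le> strip_z u \<and> strip_z u \<le> c1}"

lemma mem_hexagon: "(x,y,t) \<in> hexagon a0 a1 b0 b1 c0 c1 \<longleftrightarrow>
    a0 \<le> x \<and> x \<le> a1 \<and> b0 \<le> y \<and> y \<le> b1 \<and> c0 \<le> x+y+of_bool t \<and> x+y+of_bool t \<le> c1"
  by (simp add: hexagon_def strip_x_def strip_y_def strip_z_def)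

lemma finite_hexagon: "finite (hexagon a0 a1 b0 b1 c0 c1)"
proof -
  have "hexagon a0 a1 b0 b1 c0 c1 \<subseteq> {a0..a1} \<times> {b0..b1} \<times> UNIV"
    by (auto simp: hexagon_def strip_x_def strip_y_def)
  then show ?thesis by (rule finite_subset) auto
qed

text \<open>The empty neighbours of a hexagon lie along its six sides; one map per strip family
  enumerates those along two consecutive sides.\<close>

lemma tri_boundary_hexagon_subset:
  "tri_boundary (hexagon a0 a1 b0 b1 c0 c1) \<subseteq>
     (\<lambda>x. if c0 \<le> x + b0 then (x, b0-1, True) else (x, c0-1-x, False)) ` {a0..a1}
   \<union> (\<lambda>y. if a1 + y < c1 then (a1+1, y, False) else (c1-y, y, True)) ` {b0..b1}
   \<union> (\<lambda>z. if z - a0 \<le> b1 then (a0-1, z-a0, True) else (z-b1-1, b1+1, False)) ` {c0..c1}"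
  (is "_ \<subseteq> ?A \<union> ?B \<union> ?C")
proof
  fix v assume "v \<in> tri_boundary (hexagon a0 a1 b0 b1 c0 c1)"
  then obtain u where u: "u \<in> hexagon a0 a1 b0 b1 c0 c1" "tri_adj u v"
    and v: "v \<notin> hexagon a0 a1 b0 b1 c0 c1" by (auto simp: tri_boundary_def)
  obtain x y t x' y' t' where uv: "u = (x,y,t)" "v = (x',y',t')" by (cases u, cases v) auto
  have hu: "a0 \<le> x" "x \<le> a1" "b0 \<le> y" "y \<le> b1" "c0 \<le> x+y+of_bool t" "x+y+of_bool t \<le> c1"
    using u(1) uv by (simp_all add: mem_hexagon)
  consider (up_z) "\<not> t" "v = (x,y,True)" | (up_x) "\<not> t" "v = (x-1,y,True)"
    | (up_y) "\<not> t" "v = (x,y-1,True)" | (down_z) t "v = (x,y,False)"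
    | (down_x) t "v = (x+1,y,False)" | (down_y) t "v = (x,y+1,False)"
    using u(2) uv by (cases t) (auto simp: tri_adj_def)
  then show "v \<in> ?A \<union> ?B \<union> ?C"
  proof cases
    case up_z
    then have "v \<in> ?B" using hu v by (intro rev_image_eqI[of y]) (auto simp: mem_hexagon)
    then show ?thesis by blast
  next
    case up_x
    then have "v \<in> ?C" using hu v by (intro rev_image_eqI[of "x+y"]) (auto simp: mem_hexagon)
    then show ?thesis by blast
  next
    case up_y
    then have "v \<in> ?A" using hu v by (intro rev_image_eqI[of x]) (auto simp: mem_hexagon)
    then show ?thesis by blast
  next
    case down_z
    then have "v \<in> ?A" using hu v by (intro rev_image_eqI[of x]) (auto simp: mem_hexagon)
    then show ?thesis by blast
  next
    case down_x
    then have "v \<in> ?B" using hu v by (intro rev_image_eqI[of y]) (auto simp: mem_hexagon)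
    then show ?thesis by blast
  next
    case down_y
    then have "v \<in> ?C" using hu v by (intro rev_image_eqI[of "x+y+1"]) (auto simp: mem_hexagon)
    then show ?thesis by blast
  qed
qed

lemma card_boundary_hexagon_le:
  "card (tri_boundary (hexagon a0 a1 b0 b1 c0 c1)) \<le> card {a0..a1} + card {b0..b1} + card {c0..c1}"
proof -
  obtain f g h :: "int \<Rightarrow> tri" where
    sub: "tri_boundary (hexagon a0 a1 b0 b1 c0 c1) \<subseteq> f ` {a0..a1} \<union> g ` {b0..b1} \<union> h ` {c0..c1}"
    using tri_boundary_hexagon_subset by blast
  have "card (tri_boundary (hexagon a0 a1 b0 b1 c0 c1)) \<le> card (f ` {a0..a1} \<union> g ` {b0..b1} \<union> h ` {c0..c1})"
    using sub by (intro card_mono) auto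
  also have "\<dots> \<le> card (f ` {a0..a1}) + card (g ` {b0..b1}) + card (h ` {c0..c1})"
    by (meson card_Un_le add_le_mono le_trans order_refl)
  also have "\<dots> \<le> card {a0..a1} + card {b0..b1} + card {c0..c1}"
    by (intro add_mono card_image_le) auto
  finally show ?thesis .
qed

definition triangle :: "int \<Rightarrow> tri set" where
  "triangle n = {(x,y,t). 0 \<le> x \<and> 0 \<le> y \<and> x + y + of_bool t < n}"

lemma finite_triangle: "finite (triangle n)"
proof -
  have "triangle n \<subseteq> {0..n} \<times> {0..n} \<times> UNIV" by (auto simp: triangle_def)
  then show ?thesis by (rule finite_subset) auto
qed

lemma card_triangle: "int (card (triangle (int n))) = int n * int n"
proof (induction n)
  case 0
  have "triangle 0 = {}" by (auto simp: triangle_def)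
  then show ?case by simp
next
  case (Suc n)
  define up where "up = (\<lambda>x. (x, int n - x, False)) ` {0..int n}"
  define down where "down = (\<lambda>x. (x, int n - 1 - x, True)) ` {0..int n - 1}"
  have row: "triangle (int (Suc n)) = triangle (int n) \<union> (up \<union> down)"
    by (auto simp: triangle_def up_def down_def image_def)
  have "card (up \<union> down) = card {0..int n} + card {0..int n - 1}"
    unfolding up_def down_def by (subst card_Un_disjoint) (auto simp: card_image inj_on_def)
  moreover have "card (triangle (int (Suc n))) = card (triangle (int n)) + card (up \<union> down)"
    unfolding row by (rule card_Un_disjoint[OF finite_triangle]) (auto simp: triangle_def up_def down_def)
  ultimately show ?case using Suc by (simp add: algebra_simps)
qed

definition hex_params :: "int \<Rightarrow> int \<Rightarrow> int \<Rightarrow> int \<Rightarrow> bool" where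
  "hex_params d a b c \<longleftrightarrow> 0 \<le> a \<and> 0 \<le> b \<and> 0 \<le> c \<and> a + b \<le> d \<and> a + c \<le> d \<and> b + c \<le> d"

definition hex :: "int \<Rightarrow> int \<Rightarrow> int \<Rightarrow> int \<Rightarrow> tri set" where
  "hex d a b c = hexagon 0 (d-b-1) 0 (d-c-1) a (d-1)"

lemma finite_hex: "finite (hex d a b c)"
  by (simp add: hex_def finite_hexagon)

text \<open>hex d a b c is a parallelogram of 2(d-b)(d-c) faces minus the corner triangle
  of side a at the origin and the opposite corner triangle of side d-b-c.\<close>

lemma card_hex:
  assumes "hex_params d a b c"
  shows "int (card (hex d a b c)) = d*d - a*a - b*b - c*c"
proof -
  define A where "A = d - b"
  define B where "B = d - c"
  define e where "e = d - b - c"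
  define R where "R = {0..<A} \<times> {0..<B} \<times> (UNIV :: bool set)"
  define \<iota> where "\<iota> = (\<lambda>(x::int,y::int,t::bool). (A-1-x, B-1-y, \<not>t))"
  have p: "0 \<le> a" "0 \<le> b" "0 \<le> c" "a + b \<le> d" "a + c \<le> d" "b + c \<le> d"
    using assms by (simp_all add: hex_params_def)
  have \<iota>\<iota>: "\<iota> (\<iota> u) = u" for u by (cases u) (auto simp: \<iota>_def)
  then have inj: "inj \<iota>" by (metis injI)
  have im: "u \<in> \<iota> ` S \<longleftrightarrow> \<iota> u \<in> S" for u S by (metis \<iota>\<iota> image_iff)
  have sub: "triangle a \<union> \<iota> ` triangle e \<subseteq> R"
    using p by (auto simp: triangle_def R_def A_def B_def e_def \<iota>_def)
  have disj: "triangle a \<inter> \<iota> ` triangle e = {}"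
    using p by (auto simp: triangle_def A_def B_def e_def \<iota>_def)
  have hex_eq: "hex d a b c = R - (triangle a \<union> \<iota> ` triangle e)"
    by (rule set_eqI, simp only: Diff_iff Un_iff im)
       (auto simp: hex_def hexagon_def R_def triangle_def A_def B_def e_def \<iota>_def
         strip_x_def strip_y_def strip_z_def)
  have fR: "finite R" unfolding R_def by auto
  have "card (triangle a \<union> \<iota> ` triangle e) = card (triangle a) + card (triangle e)"
    using disj finite_triangle card_image[OF inj_on_subset[OF inj subset_UNIV]]
    by (simp add: card_Un_disjoint)
  moreover have "card (hex d a b c) = card R - card (triangle a \<union> \<iota> ` triangle e)"
    unfolding hex_eq using sub fR by (intro card_Diff_subset) (auto intro: finite_subset)
  moreover have "card (triangle a \<union> \<iota> ` triangle e) \<le> card R"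
    using sub fR by (intro card_mono) auto
  moreover have "int (card R) = A * B * 2"
    unfolding R_def using p A_def B_def by (simp add: card_cartesian_product)
  moreover have "int (card (triangle a)) = a * a" "int (card (triangle e)) = e * e"
    using card_triangle[of "nat a"] card_triangle[of "nat e"] p e_def by simp_all
  ultimately have "int (card (hex d a b c)) = A*B*2 - a*a - e*e" by simp
  then show ?thesis unfolding A_def B_def e_def by (simp add: algebra_simps)
qed

lemma T_eq_face_of_hex: "T d a b c = face_of ` hex (int d) (int a) (int b) (int c)"
proof -
  have all_face_of: "(\<forall>v\<in>face_of (x,y,t). P v) \<longleftrightarrow>
      (if t then P (x+1,y) \<and> P (x,y+1) \<and> P (x+1,y+1) else P (x,y) \<and> P (x+1,y) \<and> P (x,y+1))"
    for x y t and P :: "vertex \<Rightarrow> bool"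
    by (auto simp: face_of_def face_up_def face_down_def)
  have "face_of u \<in> T d a b c \<longleftrightarrow> u \<in> hex (int d) (int a) (int b) (int c)" for u
    by (cases u; cases "snd (snd u)")
      (auto simp: T_def faces_eq_range_face_of all_face_of hex_def mem_hexagon)
  moreover have "T d a b c \<subseteq> range face_of" by (auto simp: T_def faces_eq_range_face_of)
  ultimately show ?thesis by (auto simp: image_def)
qed

definition hex_root :: "int \<Rightarrow> tri" where
  "hex_root a = (if a = 0 then (0,0,False) else (a-1,0,True))"

lemma hex_descent:
  assumes "hex_params d a b c" "b < d" and u: "u \<in> hex d a b c" "u \<noteq> hex_root a"
  obtains v where "(adj_in (hex d a b c))\<^sup>*\<^sup>* u v" "v \<in> hex d a b c"
    "(v, u) \<in> measures [\<lambda>u. nat (strip_y u), \<lambda>u. nat (rank_yz u)]"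
proof -
  let ?H = "hex d a b c"
  obtain x y t where xyt: "u = (x,y,t)" by (cases u) auto
  have mem: "(x,y,t) \<in> ?H \<longleftrightarrow> 0 \<le> x \<and> x \<le> d-b-1 \<and> 0 \<le> y \<and> y \<le> d-c-1 \<and>
      a \<le> x+y+of_bool t \<and> x+y+of_bool t \<le> d-1" for x y t
    by (simp add: hex_def mem_hexagon)
  have hu: "0 \<le> x" "x \<le> d-b-1" "0 \<le> y" "y \<le> d-c-1" "a \<le> x+y+of_bool t" "x+y+of_bool t \<le> d-1"
    using u(1) xyt mem by auto
  have step: "(adj_in ?H)\<^sup>*\<^sup>* w w'" if "w \<in> ?H" "w' \<in> ?H" "tri_adj w w'" for w w'
    using that by (auto simp: adj_in_def)
  consider (left) "\<not> t" "0 < x" | (down) "\<not> t" "x = 0" "0 < y" | (up) t "a \<le> x + y"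
    | (detour) t "x + y < a" "0 < y"
  proof -
    have "\<not> (\<not> t \<and> x = 0 \<and> y = 0)" "\<not> (t \<and> x + y < a \<and> y = 0)"
      using u(2) hu xyt assms(1) by (auto simp: hex_root_def hex_params_def)
    then show ?thesis
      using that hu by (cases t; cases "a \<le> x + y"; cases "x = 0"; cases "y = 0") auto
  qed
  then show ?thesis
  proof cases
    case left
    show ?thesis
      by (rule that[of "(x-1,y,True)"]) (use left hu xyt in \<open>auto simp: mem tri_adj_def
          strip_y_def rank_yz_def intro!: step\<close>)
  next
    case down
    show ?thesis
      by (rule that[of "(x,y-1,True)"]) (use down hu xyt in \<open>auto simp: mem tri_adj_def
          strip_y_def rank_yz_def intro!: step\<close>)
  next
    case up
    show ?thesis
      by (rule that[of "(x,y,False)"]) (use up hu xyt in \<open>auto simp: mem tri_adj_def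
          strip_y_def rank_yz_def intro!: step\<close>)
  next
    case detour
    have "(x+1,y,False) \<in> ?H" "(x+1,y-1,True) \<in> ?H"
      using detour hu assms(1) by (auto simp: mem hex_params_def)
    moreover have "tri_adj u (x+1,y,False)" "tri_adj (x+1,y,False) (x+1,y-1,True)"
      using detour xyt by (auto simp: tri_adj_def)
    ultimately have "(adj_in ?H)\<^sup>*\<^sup>* u (x+1,y-1,True)"
      using u(1) step by (meson rtranclp_trans)
    then show ?thesis
      by (rule that) (use \<open>(x+1,y-1,True) \<in> ?H\<close> detour hu xyt in \<open>auto simp: strip_y_def\<close>)
  qed
qed

lemma hex_connected:
  assumes "hex_params d a b c" "a < d" "b < d" "c < d"
  shows "tri_connected (hex d a b c)"
proof -
  let ?H = "hex d a b c"
  have root: "hex_root a \<in> ?H"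
    using assms by (auto simp: hex_root_def hex_def mem_hexagon hex_params_def)
  have "u \<in> ?H \<longrightarrow> (adj_in ?H)\<^sup>*\<^sup>* u (hex_root a)" for u
  proof (induction u rule: wf_induct[OF wf_measures[of "[\<lambda>u. nat (strip_y u), \<lambda>u. nat (rank_yz u)]"]])
    case (1 u)
    show ?case
    proof
      assume "u \<in> ?H"
      show "(adj_in ?H)\<^sup>*\<^sup>* u (hex_root a)"
      proof (cases "u = hex_root a")
        case False
        then obtain v where "(adj_in ?H)\<^sup>*\<^sup>* u v" "v \<in> ?H"
            "(v, u) \<in> measures [\<lambda>u. nat (strip_y u), \<lambda>u. nat (rank_yz u)]"
          using hex_descent[OF assms(1,3) \<open>u \<in> ?H\<close>] by blast
        then show ?thesis using 1 by (meson rtranclp_trans)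
      qed simp
    qed
  qed
  then show ?thesis
    unfolding tri_connected_def by (meson adj_in_rtranclp_sym rtranclp_trans)
qed

definition vertex_rotate :: "int \<Rightarrow> vertex \<Rightarrow> vertex" where
  "vertex_rotate d v = (d - fst v - snd v, fst v)"
definition vertex_halfturn :: "int \<Rightarrow> int \<Rightarrow> vertex \<Rightarrow> vertex" where
  "vertex_halfturn p q v = (p - fst v, q - snd v)"
definition vertex_translate :: "int \<Rightarrow> int \<Rightarrow> vertex \<Rightarrow> vertex" where
  "vertex_translate p q v = (fst v + p, snd v + q)"

definition tri_rotate :: "int \<Rightarrow> tri \<Rightarrow> tri" where
  "tri_rotate d = (\<lambda>(x,y,t). (d - x - y - of_bool t - 1, x, t))"
definition tri_halfturn :: "int \<Rightarrow> int \<Rightarrow> tri \<Rightarrow> tri" where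
  "tri_halfturn p q = (\<lambda>(x,y,t). (p - 1 - x, q - 1 - y, \<not> t))"
definition tri_translate :: "int \<Rightarrow> int \<Rightarrow> tri \<Rightarrow> tri" where
  "tri_translate p q = (\<lambda>(x,y,t). (x + p, y + q, t))"

lemma lattice_symI:
  assumes "\<And>v. g (f v) = v" "\<And>v. f (g v) = v" "\<And>v w. dist2 (f v) (f w) = dist2 v w"
  shows "lattice_sym f"
  unfolding lattice_sym_def using assms by (metis o_bij comp_apply id_apply ext)

lemma lattice_sym_vertex_rotate: "lattice_sym (vertex_rotate d)"
  by (rule lattice_symI[where g = "\<lambda>v. (snd v, d - fst v - snd v)"])
    (auto simp: vertex_rotate_def dist2_def Let_def algebra_simps)

lemma lattice_sym_vertex_halfturn: "lattice_sym (vertex_halfturn p q)"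
  by (rule lattice_symI[where g = "vertex_halfturn p q"])
    (auto simp: vertex_halfturn_def dist2_def Let_def algebra_simps)

lemma lattice_sym_vertex_translate: "lattice_sym (vertex_translate p q)"
  by (rule lattice_symI[where g = "vertex_translate (-p) (-q)"])
    (auto simp: vertex_translate_def dist2_def Let_def algebra_simps)

lemma lattice_sym_comp: assumes "lattice_sym f" "lattice_sym g" shows "lattice_sym (f \<circ> g)"
proof -
  have "bij (f \<circ> g)" using assms by (auto simp: lattice_sym_def intro: bij_comp)
  moreover have "dist2 ((f \<circ> g) p) ((f \<circ> g) q) = dist2 p q" for p q
    using assms unfolding lattice_sym_def comp_def by metis
  ultimately show ?thesis by (simp add: lattice_sym_def)
qed

lemma image_face_of_tri_rotate: "vertex_rotate d ` face_of u = face_of (tri_rotate d u)"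
  by (cases u; cases "snd (snd u)")
    (auto simp: vertex_rotate_def tri_rotate_def face_of_def face_up_def face_down_def algebra_simps)

lemma image_face_of_tri_halfturn: "vertex_halfturn p q ` face_of u = face_of (tri_halfturn p q u)"
  by (cases u; cases "snd (snd u)")
    (auto simp: vertex_halfturn_def tri_halfturn_def face_of_def face_up_def face_down_def algebra_simps)

lemma image_face_of_tri_translate: "vertex_translate p q ` face_of u = face_of (tri_translate p q u)"
  by (cases u; cases "snd (snd u)")
    (auto simp: vertex_translate_def tri_translate_def face_of_def face_up_def face_down_def algebra_simps)

definition congruent :: "tri set \<Rightarrow> tri set \<Rightarrow> bool" where
  "congruent S S' \<longleftrightarrow> (\<exists>f. lattice_sym f \<and> face_of ` S' = sym_image f (face_of ` S))"

lemma congruent_trans: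
  assumes "congruent S1 S2" "congruent S2 S3" shows "congruent S1 S3"
proof -
  have "sym_image (f \<circ> g) P = sym_image f (sym_image g P)" for f g P
    by (auto simp: sym_image_def image_comp)
  then show ?thesis
    using assms unfolding congruent_def by (metis lattice_sym_comp)
qed

lemma congruentI:
  assumes "lattice_sym f" "\<And>u. f ` face_of u = face_of (g u)"
  shows "congruent S (g ` S)"
proof -
  have "sym_image f (face_of ` S) = face_of ` g ` S"
    unfolding sym_image_def image_image assms(2) ..
  then show ?thesis using assms(1) unfolding congruent_def by metis
qed

lemma congruent_tri_rotate: "congruent S (tri_rotate d ` S)"
  by (rule congruentI[OF lattice_sym_vertex_rotate image_face_of_tri_rotate])

lemma congruent_tri_halfturn: "congruent S (tri_halfturn p q ` S)"
  by (rule congruentI[OF lattice_sym_vertex_halfturn image_face_of_tri_halfturn])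

lemma congruent_tri_translate: "congruent S (tri_translate p q ` S)"
  by (rule congruentI[OF lattice_sym_vertex_translate image_face_of_tri_translate])

lemma congruent_refl: "congruent S S"
  using congruent_tri_translate[of S 0 0] by (simp add: tri_translate_def)

lemma image_eq_vimage_if_inverse:
  assumes "\<And>u. h (g u) = u" "\<And>v. g (h v) = v"
  shows "g ` A = h -` A"
  using assms by (auto simp: image_def) metis

lemma tri_rotate_hex: "tri_rotate d ` hex d a b c = hex d c a b"
  by (subst image_eq_vimage_if_inverse[where h = "\<lambda>(x,y,t). (y, d - 1 - x - y - of_bool t, t)"])
    (auto simp: tri_rotate_def hex_def hexagon_def strip_x_def strip_y_def strip_z_def)

lemma tri_halfturn_hex:
  "tri_halfturn (d-b) (d-c) ` hex d a b c = hex (2*d-a-b-c) (d-b-c) (d-a-c) (d-a-b)"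
  by (subst image_eq_vimage_if_inverse[where h = "tri_halfturn (d-b) (d-c)"])
    (auto simp: tri_halfturn_def hex_def hexagon_def strip_x_def strip_y_def strip_z_def)

lemma tri_translate_hex:
  "tri_translate p q ` hex d a b c = hexagon p (p+d-b-1) q (q+d-c-1) (a+p+q) (d-1+p+q)"
  by (subst image_eq_vimage_if_inverse[where h = "tri_translate (-p) (-q)"])
    (auto simp: tri_translate_def hex_def hexagon_def strip_x_def strip_y_def strip_z_def)

text \<open>The parameters of the hexagons obtained from hex d a b c by rotations and the half-turn.\<close>

definition hex_orbit :: "int \<Rightarrow> int \<Rightarrow> int \<Rightarrow> int \<Rightarrow> (int \<times> int \<times> int \<times> int) set" where
  "hex_orbit d a b c = (let e = 2*d-a-b-c; a' = d-b-c; b' = d-a-c; c' = d-a-b in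
     {(d,a,b,c), (d,c,a,b), (d,b,c,a), (e,a',b',c'), (e,c',a',b'), (e,b',c',a')})"

lemma congruent_hex_orbit:
  assumes "(d',a',b',c') \<in> hex_orbit d a b c"
  shows "congruent (hex d a b c) (hex d' a' b' c')"
proof -
  have rot: "congruent (hex d a b c) (hex d c a b)" for d a b c
    using congruent_tri_rotate[of "hex d a b c" d] by (simp add: tri_rotate_hex)
  have rot2: "congruent (hex d a b c) (hex d b c a)" for d a b c
    using congruent_trans[OF rot rot] .
  have half: "congruent (hex d a b c) (hex (2*d-a-b-c) (d-b-c) (d-a-c) (d-a-b))"
    using congruent_tri_halfturn[of "hex d a b c" "d-b" "d-c"] by (simp add: tri_halfturn_hex)
  show ?thesis
    using assms congruent_refl rot rot2 half congruent_trans[OF half rot] congruent_trans[OF half rot2]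
    by (auto simp: hex_orbit_def Let_def)
qed

definition max_area :: "nat \<Rightarrow> int \<Rightarrow> int" where
  "max_area i r = 6*r*r + 2*int i*r + [0, -1, 0, 1, 2, 3] ! i"

definition EB_d :: "nat \<Rightarrow> int \<Rightarrow> int" where "EB_d i r = 3*r + [0, 0, 1, 1, 2, 2] ! i"
definition EB_a :: "nat \<Rightarrow> int \<Rightarrow> int" where "EB_a i r = r - of_bool (i = 1)"
definition EB_b :: "nat \<Rightarrow> int \<Rightarrow> int" where "EB_b i r = r + of_bool (i = 4)"
definition EB_c :: "nat \<Rightarrow> int \<Rightarrow> int" where "EB_c i r = r + of_bool (i \<in> {2, 4, 5})"

definition EB_hex :: "nat \<Rightarrow> int \<Rightarrow> tri set" where
  "EB_hex i r = hex (EB_d i r) (EB_a i r) (EB_b i r) (EB_c i r)"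

lemma less_6_cases: "i < (6::nat) \<Longrightarrow> i = 0 \<or> i = 1 \<or> i = 2 \<or> i = 3 \<or> i = 4 \<or> i = 5"
  by auto

lemma six_max_area:
  "i < 6 \<Longrightarrow> 6 * max_area i r = (6*r + int i)^2 - [0, 7, 4, 3, 4, 7] ! i"
  by (drule less_6_cases) (auto simp: max_area_def power2_eq_square algebra_simps)

lemma even_max_area_plus: "i < 6 \<Longrightarrow> even (max_area i r + (6*r + int i))"
proof -
  assume "i < 6"
  then have "even (int i + [0, -1, 0, 1, 2, 3] ! i)" by (drule_tac less_6_cases) auto
  moreover have "max_area i r + (6*r + int i) = 2*(3*r*r + int i*r + 3*r) + (int i + [0, -1, 0, 1, 2, 3] ! i)"
    by (simp add: max_area_def algebra_simps)
  ultimately show ?thesis by simp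
qed

lemma hex_perimeter_area_identity:
  fixes d a b c :: int
  shows "(3*d-a-b-c)^2 - 6*(d*d-a*a-b*b-c*c) = 3*(d-a-b-c)^2 + 2*((a-b)^2 + (b-c)^2 + (a-c)^2)"
  by (simp add: power2_eq_square algebra_simps)

lemma even_hex_area_plus: "even ((d*d-a*a-b*b-c*c) + (3*d-a-b-c :: int))"
proof -
  have "(d*d-a*a-b*b-c*c) + (3*d-a-b-c) = d*(d+1) - a*(a+1) - b*(b+1) - c*(c+1) + 2*d"
    by (simp add: algebra_simps)
  then show ?thesis by simp
qed

lemma hex_area_le_max_area:
  fixes d a b c r :: int
  assumes "r \<ge> 1" "i < 6" "0 \<le> 3*d-a-b-c" "3*d-a-b-c \<le> 6*r + int i"
  shows "d*d-a*a-b*b-c*c \<le> max_area i r"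
    and "d*d-a*a-b*b-c*c = max_area i r \<Longrightarrow> 3*d-a-b-c = 6*r + int i"
proof -
  define w where "w = 3*d-a-b-c"
  define s where "s = 6*r + int i"
  define A where "A = d*d-a*a-b*b-c*c"
  have "[0, 7, 4, 3, 4, 7] ! i \<le> (7::int)" "0 \<le> ([0, 7, 4, 3, 4, 7] ! i :: int)"
    using less_6_cases[OF assms(2)] by auto
  then have max: "s^2 - 7 \<le> 6 * max_area i r" "6 * max_area i r \<le> s^2"
    using six_max_area[OF assms(2)] s_def by auto
  have "6*A \<le> w^2" using hex_perimeter_area_identity[of d a b c] A_def w_def
    by (smt (verit) zero_le_power2)
  moreover have "w^2 \<le> s^2" using assms(3,4) w_def s_def by (simp add: power_mono)
  ultimately have le: "A \<le> max_area i r + 1" using max by linarith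
  have "A < max_area i r" if "w < s"
  proof -
    have "w^2 \<le> (s-1)^2" using that assms(3) w_def by (simp add: power_mono)
    then show ?thesis using \<open>6*A \<le> w^2\<close> max assms(1) s_def by (simp add: power2_eq_square algebra_simps)
  qed
  moreover have "A \<noteq> max_area i r + 1" if "w = s"
    using that even_hex_area_plus[of d a b c] even_max_area_plus[OF assms(2), of r] A_def w_def s_def
    by (metis add.commute add.left_commute even_add odd_one)
  ultimately show "A \<le> max_area i r" "A = max_area i r \<Longrightarrow> w = s"
    using le assms(4) w_def s_def by (smt (verit))+
qed

lemma sq_le_3: "(x::int)^2 \<le> 3 \<Longrightarrow> x = -1 \<or> x = 0 \<or> x = 1"
proof (rule ccontr)
  assume "x^2 \<le> 3" "\<not> (x = -1 \<or> x = 0 \<or> x = 1)"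
  moreover from this have "2^2 \<le> \<bar>x\<bar>^2" by (intro power_mono) auto
  ultimately show False by simp
qed

lemma hex_area_eq_max_area:
  fixes d a b c r :: int
  assumes "r \<ge> 1" "i < 6" "3*d-a-b-c = 6*r + int i" "d*d-a*a-b*b-c*c = max_area i r"
  shows "(d,a,b,c) \<in> hex_orbit (EB_d i r) (EB_a i r) (EB_b i r) (EB_c i r)"
proof -
  define u where "u = d-a-b-c"
  define p where "p = a-b"
  define q where "q = b-c"
  have form: "3*u^2 + 2*(p^2 + q^2 + (p+q)^2) = [0, 7, 4, 3, 4, 7] ! i"
    using hex_perimeter_area_identity[of d a b c] six_max_area[OF assms(2), of r] assms(3,4)
    unfolding u_def p_def q_def by (simp add: algebra_simps)
  moreover have "[0, 7, 4, 3, 4, 7] ! i \<le> (7::int)" using less_6_cases[OF assms(2)] by auto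
  ultimately have "u^2 \<le> 3" "p^2 \<le> 3" "q^2 \<le> 3"
    by (smt (verit) zero_le_power2)+
  then have small: "u = -1 \<or> u = 0 \<or> u = 1" "p = -1 \<or> p = 0 \<or> p = 1" "q = -1 \<or> q = 0 \<or> q = 1"
    using sq_le_3 by blast+
  have "6*b = 6*r + (int i - 3*u - 2*p + 2*q)"
    using assms(3) unfolding u_def p_def q_def by (simp add: algebra_simps)
  then have b: "b = r + (int i - 3*u - 2*p + 2*q) div 6" "(int i - 3*u - 2*p + 2*q) mod 6 = 0"
    by presburger+
  have dac: "a = b + p" "c = b - q" "d = u + 3*b + p - q" unfolding u_def p_def q_def by simp_all
  show ?thesis
    using small form less_6_cases[OF assms(2)] b unfolding dac
    by (elim disjE) (simp_all add: hex_orbit_def Let_def EB_d_def EB_a_def EB_b_def EB_c_def)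
qed

lemma bounding_hexagon:
  assumes "finite Q" "Q \<noteq> {}" "tri_connected Q"
  obtains d a b c p q where "hex_params d a b c" "Q \<subseteq> tri_translate p q ` hex d a b c"
    "3*d-a-b-c \<le> int (card (tri_boundary Q))"
proof -
  define X0 X1 Y0 Y1 Z0 Z1 where "X0 = Min (strip_x ` Q)" "X1 = Max (strip_x ` Q)"
    "Y0 = Min (strip_y ` Q)" "Y1 = Max (strip_y ` Q)" "Z0 = Min (strip_z ` Q)" "Z1 = Max (strip_z ` Q)"
  have bounds: "X0 \<le> strip_x u \<and> strip_x u \<le> X1 \<and> Y0 \<le> strip_y u \<and> strip_y u \<le> Y1 \<and>
      Z0 \<le> strip_z u \<and> strip_z u \<le> Z1" if "u \<in> Q" for u
    using that assms(1) unfolding X0_X1_Y0_Y1_Z0_Z1_def by auto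
  have attained: "\<exists>u\<in>Q. k u = Min (k ` Q)" "\<exists>u\<in>Q. k u = Max (k ` Q)" for k :: "tri \<Rightarrow> int"
    using Min_in[of "k ` Q"] Max_in[of "k ` Q"] assms(1,2) by (auto simp del: Min_in Max_in)
  have z: "strip_x u + strip_y u \<le> strip_z u \<and> strip_z u \<le> strip_x u + strip_y u + 1" for u
    by (simp add: strip_x_def strip_y_def strip_z_def)
  define d where "d = Z1 - X0 - Y0 + 1"
  define a where "a = Z0 - X0 - Y0"
  define b where "b = d - (X1 - X0 + 1)"
  define c where "c = d - (Y1 - Y0 + 1)"
  have "hex_params d a b c"
    unfolding hex_params_def
  proof (intro conjI)
    obtain ux0 ux1 uy0 uy1 uz0 uz1 where "ux0 \<in> Q" "strip_x ux0 = X0" "ux1 \<in> Q" "strip_x ux1 = X1"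
      "uy0 \<in> Q" "strip_y uy0 = Y0" "uy1 \<in> Q" "strip_y uy1 = Y1"
      "uz0 \<in> Q" "strip_z uz0 = Z0" "uz1 \<in> Q" "strip_z uz1 = Z1"
      using attained unfolding X0_X1_Y0_Y1_Z0_Z1_def by metis
    note extremes = this bounds[OF this(1)] bounds[OF this(3)] bounds[OF this(5)]
      bounds[OF this(7)] bounds[OF this(9)] bounds[OF this(11)]
      z[of ux0] z[of ux1] z[of uy0] z[of uy1] z[of uz0] z[of uz1]
    show "0 \<le> a" "0 \<le> b" "0 \<le> c" "a + b \<le> d" "a + c \<le> d" "b + c \<le> d"
      using extremes unfolding a_def b_def c_def d_def by linarith+
  qed
  moreover have "Q \<subseteq> tri_translate X0 Y0 ` hex d a b c"
    using bounds by (auto simp: tri_translate_hex a_def b_def c_def d_def hexagon_def)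
  moreover have "3*d-a-b-c \<le> int (card (tri_boundary Q))"
  proof -
    have "3*d-a-b-c = (X1 - X0 + 1) + (Y1 - Y0 + 1) + (Z1 - Z0 + 1)"
      by (simp add: a_def b_def c_def d_def)
    then show ?thesis
      using strip_widths_le_card_boundary[OF assms] unfolding X0_X1_Y0_Y1_Z0_Z1_def by linarith
  qed
  ultimately show ?thesis using that by blast
qed

lemma card_tri_translate: "card (tri_translate p q ` S) = card S"
  by (rule card_image) (auto simp: inj_on_def tri_translate_def)

lemma polyiamond_in_hex:
  assumes "polyiamond P"
  obtains Q d a b c p q where "P = face_of ` Q" "hex_params d a b c"
    "Q \<subseteq> tri_translate p q ` hex d a b c" "3*d-a-b-c \<le> int (site_perimeter P)"
    "int (area P) \<le> d*d-a*a-b*b-c*c"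
proof -
  obtain Q where Q: "P = face_of ` Q" "finite Q" "Q \<noteq> {}" "tri_connected Q"
    using polyiamondE[OF assms] by blast
  obtain d a b c p q where hex: "hex_params d a b c" "Q \<subseteq> tri_translate p q ` hex d a b c"
    "3*d-a-b-c \<le> int (card (tri_boundary Q))"
    using bounding_hexagon[OF Q(2-4)] by blast
  have "card Q \<le> card (hex d a b c)"
    using card_mono[OF finite_imageI[OF finite_hex] hex(2)] by (simp add: card_tri_translate)
  then show ?thesis
    using that[OF Q(1) hex(1,2)] hex(3) card_hex[OF hex(1)]
    by (simp add: Q(1) area_face_of site_perimeter_face_of)
qed

lemma polyiamond_area_le_max_area:
  assumes "r \<ge> 1" "i < 6" "polyiamond P" "int (site_perimeter P) \<le> 6*r + int i"
  shows "int (area P) \<le> max_area i r"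
proof -
  obtain Q d a b c p q where "hex_params d a b c" "3*d-a-b-c \<le> int (site_perimeter P)"
      "int (area P) \<le> d*d-a*a-b*b-c*c"
    using polyiamond_in_hex[OF assms(3)] .
  moreover have "0 \<le> 3*d-a-b-c" using \<open>hex_params d a b c\<close> by (simp add: hex_params_def)
  ultimately show ?thesis using hex_area_le_max_area(1)[OF assms(1,2)] assms(4) by fastforce
qed

lemma polyiamond_area_eq_max_area:
  assumes "r \<ge> 1" "i < 6" "polyiamond P" "int (site_perimeter P) \<le> 6*r + int i"
    and "int (area P) = max_area i r"
  shows "int (site_perimeter P) = 6*r + int i"
    and "\<exists>f. lattice_sym f \<and> P = sym_image f (face_of ` EB_hex i r)"
proof -
  obtain Q d a b c p q where Q: "P = face_of ` Q" "hex_params d a b c"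
      "Q \<subseteq> tri_translate p q ` hex d a b c" "3*d-a-b-c \<le> int (site_perimeter P)"
      "int (area P) \<le> d*d-a*a-b*b-c*c"
    using polyiamond_in_hex[OF assms(3)] .
  have w: "0 \<le> 3*d-a-b-c" "3*d-a-b-c \<le> 6*r + int i"
    using Q(2,4) assms(4) by (auto simp: hex_params_def)
  have area: "d*d-a*a-b*b-c*c = max_area i r"
    using hex_area_le_max_area(1)[OF assms(1,2) w] Q(5) assms(5) by linarith
  then have perimeter: "3*d-a-b-c = 6*r + int i"
    using hex_area_le_max_area(2)[OF assms(1,2) w] by blast
  then show "int (site_perimeter P) = 6*r + int i" using Q(4) assms(4) by linarith
  have "card Q = card (tri_translate p q ` hex d a b c)"
    using Q(1,5) area assms(5) card_hex[OF Q(2)] by (simp add: area_face_of card_tri_translate)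
  then have "Q = tri_translate p q ` hex d a b c"
    using card_subset_eq[OF finite_imageI[OF finite_hex] Q(3)] by argo
  then have "congruent (hex d a b c) Q" using congruent_tri_translate by metis
  moreover have "congruent (EB_hex i r) (hex d a b c)"
    unfolding EB_hex_def
    by (rule congruent_hex_orbit[OF hex_area_eq_max_area[OF assms(1,2) perimeter area]])
  ultimately show "\<exists>f. lattice_sym f \<and> P = sym_image f (face_of ` EB_hex i r)"
    using congruent_trans Q(1) unfolding congruent_def by metis
qed

lemma EB_eq_face_of_EB_hex:
  assumes "r \<ge> 1" "i < 6" shows "EB i r = face_of ` EB_hex i (int r)"
  using less_6_cases[OF assms(2)] assms(1)
  by (auto simp: EB_def EB_hex_def T_eq_face_of_hex EB_d_def EB_a_def EB_b_def EB_c_def of_nat_diff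
      add.commute)

lemma EB_hex_params:
  fixes r :: int
  assumes "r \<ge> 1" "i < 6"
  defines "d \<equiv> EB_d i r" and "a \<equiv> EB_a i r" and "b \<equiv> EB_b i r" and "c \<equiv> EB_c i r"
  shows "hex_params d a b c" "a < d" "b < d" "c < d" "3*d-a-b-c = 6*r + int i"
    "d*d-a*a-b*b-c*c = max_area i r"
  using less_6_cases[OF assms(2)] assms(1)
  by (auto simp: d_def a_def b_def c_def EB_d_def EB_a_def EB_b_def EB_c_def hex_params_def
      max_area_def algebra_simps)

lemma polyiamond_EB_hex:
  assumes "r \<ge> 1" "i < 6" shows "polyiamond (face_of ` EB_hex i r)"
proof -
  have "0 < max_area i r"
    using assms less_6_cases[OF assms(2)] by (auto simp: max_area_def) (smt (verit) mult_pos_pos)+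
  then have "EB_hex i r \<noteq> {}"
    using card_hex[OF EB_hex_params(1)[OF assms]] EB_hex_params(6)[OF assms] by (auto simp: EB_hex_def)
  then show ?thesis
    using hex_connected[OF EB_hex_params(1-4)[OF assms]]
    by (simp add: polyiamond_face_of_iff EB_hex_def finite_hex)
qed

lemma site_perimeter_EB_hex_le:
  assumes "r \<ge> 1" "i < 6" shows "int (site_perimeter (face_of ` EB_hex i r)) \<le> 6*r + int i"
proof -
  have "card (tri_boundary (EB_hex i r)) \<le>
      card {0..EB_d i r - EB_b i r - 1} + card {0..EB_d i r - EB_c i r - 1} + card {EB_a i r..EB_d i r - 1}"
    unfolding EB_hex_def hex_def by (rule card_boundary_hexagon_le)
  then show ?thesis
    using EB_hex_params[OF assms] by (simp add: site_perimeter_face_of hex_params_def)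
qed

theorem proposition7p2:
  fixes r i :: nat
  assumes "r \<ge> 1" and "i < 6"
  shows "polyiamond (EB i r) \<and> site_perimeter (EB i r) = 6*r + i
         \<and> (\<forall>P. polyiamond P \<and> site_perimeter P = 6*r + i \<longrightarrow> area P \<le> area (EB i r))
         \<and> (\<forall>P. polyiamond P \<and> site_perimeter P = 6*r + i \<and> area P = area (EB i r) \<longrightarrow>
              P \<in> quasi_regular_hexagons \<and> (\<exists>f. lattice_sym f \<and> P = sym_image f (EB i r)))"
proof -
  have R: "int r \<ge> 1" using assms(1) by simp
  have EB: "EB i r = face_of ` EB_hex i (int r)" by (rule EB_eq_face_of_EB_hex[OF assms])
  have poly: "polyiamond (EB i r)" unfolding EB by (rule polyiamond_EB_hex[OF R assms(2)])
  have area: "int (area (EB i r)) = max_area i (int r)"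
    unfolding EB area_face_of EB_hex_def
    using card_hex EB_hex_params[OF R assms(2)] by simp
  have perimeter: "site_perimeter (EB i r) = 6*r + i"
    using polyiamond_area_eq_max_area(1)[OF R assms(2) poly _ area]
      site_perimeter_EB_hex_le[OF R assms(2)] EB by simp
  have le: "area P \<le> area (EB i r)" if "polyiamond P" "site_perimeter P = 6*r + i" for P
    using polyiamond_area_le_max_area[OF R assms(2) that(1)] that(2) area by simp
  have congr: "\<exists>f. lattice_sym f \<and> P = sym_image f (EB i r)"
    if "polyiamond P" "site_perimeter P = 6*r + i" "area P = area (EB i r)" for P
    using polyiamond_area_eq_max_area(2)[OF R assms(2) that(1)] that(2,3) area EB by simp
  show ?thesis
    using poly perimeter le congr assms unfolding quasi_regular_hexagons_def by blast
qed

end
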